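(* Let $(M,\circ,\mathrm{OR})$ be a free $\mathbb{D}$-module of rank 3 with scalar product and orientation, let $z_1,z_2,z_3\in M\setminus\epsilon M$, and assume $z_1,z_2$ are $\mathbb{D}$-linearly independent. Then $z_3=az_1+bz_2$ for some $a,b\in\mathbb{D}$ if and only if the axes of $z_1,z_2,z_3$ all intersect orthogonally one and the same line of $E$.
   Context: $\mathbb{D}=\{a+\epsilon b: a,b\in\mathbb{R}\}$, $\epsilon^2=0$, $\mathfrak{Re},\mathfrak{Du}$ real and dual parts. Scalar product: symmetric $\mathbb{D}$-bilinear $\circ:M\times M\to\mathbb{D}$ with $\mathfrak{Re}(x\circ x)\ge0$, equality iff $x\in\epsilon M$; orientation: one of the two classes of ordered bases under $\{b'_j=A_{jk}b_k\}\sim\{b_k\}$ iff $\det\mathfrak{Re}(A)>0$. $V=M/\epsilon M$, $\pi$ the quotient map, with inner product induced by $\mathfrak{Re}(\cdot\circ\cdot)$. $E$ is the set of real 3-dimensional subspaces $P\subset M$ with $\mathfrak{Du}(x\circ y)=0$ for $x,y\in P$ and $P\cap\epsilon M=\{0\}$; it is a Euclidean affine space over $V$: for $A,B\in E$ and a positive orthonormal basis $\{e_i\}$ of $V$, with $e_i^P\in P$ the unique lift of $e_i$, one has $e^B_i=e^A_i+\epsilon\,\epsilon_{ijk}d^ke^A_j$ and $B-A:=d^ke_k$. Axis: each $z\in M\setminus\epsilon M$ is uniquely $z=(a+\epsilon b)u$ with $a>0$, $b\in\mathbb{R}$, $u\circ u=1$; the set of $P\in E$ with $u\in P$ is a line of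 $E$ with direction $\pi(u)$, called the axis of $z$. *)

theory Defs
  imports "HOL-Analysis.Analysis"
begin

text \<open>Dual numbers a + eps b are represented as pairs (a, b) of reals;
  fst is the real part, snd the dual part; addition is componentwise.\<close>
type_synonym dual = "real \<times> real"

definition dmul :: "dual \<Rightarrow> dual \<Rightarrow> dual" where
  "dmul p q = (fst p * fst q, fst p * snd q + snd p * fst q)"

text \<open>A free D-module of rank 3 is modelled (via a fixed basis) as D^3, written as
  pairs (x, y) of vectors in real^3 meaning x + eps y.\<close>
type_synonym dmod = "(real^3) \<times> (real^3)"

definition smul :: "dual \<Rightarrow> dmod \<Rightarrow> dmod" where
  "smul c m = (fst c *\<^sub>R fst m, fst c *\<^sub>R snd m + snd c *\<^sub>R fst m)"

definition epsM :: "dmod set" where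
  "epsM = range (smul (0, 1))"

definition scalar_product :: "(dmod \<Rightarrow> dmod \<Rightarrow> dual) \<Rightarrow> bool" where
  "scalar_product g \<longleftrightarrow>
     (\<forall>x y. g x y = g y x) \<and>
     (\<forall>x y z. g (x + y) z = g x z + g y z) \<and>
     (\<forall>c x y. g (smul c x) y = dmul c (g x y)) \<and>
     (\<forall>x. 0 \<le> fst (g x x) \<and> (fst (g x x) = 0 \<longleftrightarrow> x \<in> epsM))"

definition dbasis :: "(3 \<Rightarrow> dmod) \<Rightarrow> bool" where
  "dbasis b \<longleftrightarrow> (\<forall>m. \<exists>!c :: 3 \<Rightarrow> dual. m = (\<Sum>k\<in>UNIV. smul (c k) (b k)))"

definition oequiv :: "(3 \<Rightarrow> dmod) \<Rightarrow> (3 \<Rightarrow> dmod) \<Rightarrow> bool" where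
  "oequiv b' b \<longleftrightarrow> (\<exists>A :: 3 \<Rightarrow> 3 \<Rightarrow> dual.
      (\<forall>j. b' j = (\<Sum>k\<in>UNIV. smul (A j k) (b k))) \<and>
      det (\<chi> j k. fst (A j k)) > 0)"

definition orientation :: "(3 \<Rightarrow> dmod) set \<Rightarrow> bool" where
  "orientation OR \<longleftrightarrow> (\<exists>b. dbasis b \<and> OR = {b'. dbasis b' \<and> oequiv b' b})"

text \<open>V = M / eps M is identified with real^3 via the quotient map pi = fst;
  its inner product is induced by the real part of g.\<close>
definition vin :: "(dmod \<Rightarrow> dmod \<Rightarrow> dual) \<Rightarrow> real^3 \<Rightarrow> real^3 \<Rightarrow> real" where
  "vin g v w = fst (g (v, 0) (w, 0))"

definition pos_onb :: "(dmod \<Rightarrow> dmod \<Rightarrow> dual) \<Rightarrow> (3 \<Rightarrow> dmod) set \<Rightarrow> (3 \<Rightarrow> real^3) \<Rightarrow> bool" where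
  "pos_onb g OR e \<longleftrightarrow>
     (\<forall>i j. vin g (e i) (e j) = (if i = j then 1 else 0)) \<and> (\<lambda>i. (e i, 0)) \<in> OR"

definition inE :: "(dmod \<Rightarrow> dmod \<Rightarrow> dual) \<Rightarrow> dmod set \<Rightarrow> bool" where
  "inE g P \<longleftrightarrow> subspace P \<and> dim P = 3 \<and>
     (\<forall>x\<in>P. \<forall>y\<in>P. snd (g x y) = 0) \<and> P \<inter> epsM = {0}"

definition lift :: "dmod set \<Rightarrow> real^3 \<Rightarrow> dmod" where
  "lift P v = (THE x. x \<in> P \<and> fst x = v)"

definition levi :: "3 \<Rightarrow> 3 \<Rightarrow> 3 \<Rightarrow> real" where
  "levi i j k = det (\<chi> r :: 3. if r = 0 then axis i (1::real) else if r = 1 then axis j 1 else axis k 1)"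

text \<open>Affine structure on E: translates g OR A v B means B - A = v.\<close>
definition translates :: "(dmod \<Rightarrow> dmod \<Rightarrow> dual) \<Rightarrow> (3 \<Rightarrow> dmod) set \<Rightarrow> dmod set \<Rightarrow> real^3 \<Rightarrow> dmod set \<Rightarrow> bool" where
  "translates g OR A v B \<longleftrightarrow> inE g A \<and> inE g B \<and>
     (\<forall>e. pos_onb g OR e \<longrightarrow>
        (\<forall>i. lift B (e i) = lift A (e i) +
             smul (0, 1) (\<Sum>j\<in>UNIV. \<Sum>k\<in>UNIV. (levi i j k * vin g v (e k)) *\<^sub>R lift A (e j))))"

definition line_dir :: "(dmod \<Rightarrow> dmod \<Rightarrow> dual) \<Rightarrow> (3 \<Rightarrow> dmod) set \<Rightarrow> dmod set set \<Rightarrow> real^3 \<Rightarrow> bool" where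
  "line_dir g OR L d \<longleftrightarrow> d \<noteq> 0 \<and>
     (\<exists>A. inE g A \<and> L = {B. \<exists>t::real. translates g OR A (t *\<^sub>R d) B})"

definition is_line :: "(dmod \<Rightarrow> dmod \<Rightarrow> dual) \<Rightarrow> (3 \<Rightarrow> dmod) set \<Rightarrow> dmod set set \<Rightarrow> bool" where
  "is_line g OR L \<longleftrightarrow> (\<exists>d. line_dir g OR L d)"

definition meet_orth :: "(dmod \<Rightarrow> dmod \<Rightarrow> dual) \<Rightarrow> (3 \<Rightarrow> dmod) set \<Rightarrow> dmod set set \<Rightarrow> dmod set set \<Rightarrow> bool" where
  "meet_orth g OR L1 L2 \<longleftrightarrow> is_line g OR L1 \<and> is_line g OR L2 \<and> L1 \<inter> L2 \<noteq> {} \<and>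
     (\<forall>d1 d2. line_dir g OR L1 d1 \<and> line_dir g OR L2 d2 \<longrightarrow> vin g d1 d2 = 0)"

definition unitpart :: "(dmod \<Rightarrow> dmod \<Rightarrow> dual) \<Rightarrow> dmod \<Rightarrow> dmod" where
  "unitpart g z = (THE u. g u u = (1, 0) \<and> (\<exists>a b. a > 0 \<and> z = smul (a, b) u))"

definition axis_of :: "(dmod \<Rightarrow> dmod \<Rightarrow> dual) \<Rightarrow> dmod \<Rightarrow> dmod set set" where
  "axis_of g z = {P. inE g P \<and> unitpart g z \<in> P}"

end

theory Submission
  imports Defs
begin

(*
  Fix a positively oriented orthonormal frame e0 of V.  Coordinates in e0, with the dual part
  shifted by half of the dual part of the scalar product, identify M D-linearly and isometrically
  with pairs X = (x, y) of vectors of R^3 (standing for x + \<epsilon> y) under the product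
  ddot X X' = (x \<bullet> x', x \<bullet> y' + y \<bullet> x').
  In this model the elements of E are the graphs {(a, w \<times> a)} for w in R^3, and translation
  by v moves w to w + v, because in a positive orthonormal frame the Levi-Civita sum of the
  translation formula is a cross product.  So E is R^3 and its lines are the ordinary lines.

  The axis of X = (x, y) is the line, with direction x, of the points w with w \<times> x = y
  modulo x.  The line through w with direction d meets it orthogonally iff x \<bullet> d = 0 and
  x \<bullet> (w \<times> d) + y \<bullet> d = 0, that is iff ddot X (d, w \<times> d) = 0.  So the theorem says
  that z3 lies in the D-span of z1, z2 iff z1, z2, z3 are D-orthogonal to a common (d, w \<times> d)
  with d \<noteq> 0.  For independent z1, z2 such a vector exists, with d = x1 \<times> x2; conversely,
  orthogonality to it puts x3, and then the dual part of z3 - a z1 - b z2, into the span of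
  x1 and x2.
*)

unbundle cross3_syntax

lemma fst_smul [simp]: "fst (smul c x) = fst c *\<^sub>R fst x"
  by (simp add: smul_def)

lemma snd_smul [simp]: "snd (smul c x) = fst c *\<^sub>R snd x + snd c *\<^sub>R fst x"
  by (simp add: smul_def)

lemma smul_Pair [simp]: "smul c (a, b) = (fst c *\<^sub>R a, fst c *\<^sub>R b + snd c *\<^sub>R a)"
  by (simp add: smul_def)

lemma dmul_eq [simp]: "dmul c d = (fst c * fst d, fst c * snd d + snd c * fst d)"
  by (simp add: dmul_def)

lemma epsM_iff: "x \<in> epsM \<longleftrightarrow> fst x = 0"
proof
  assume "fst x = 0"
  then have "x = smul (0, 1) (snd x, 0)" by (cases x) simp
  then show "x \<in> epsM" unfolding epsM_def by blast
qed (auto simp: epsM_def)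

section \<open>Orientations\<close>

definition re_matrix :: "(3 \<Rightarrow> dmod) \<Rightarrow> real^3^3" where
  "re_matrix b = (\<chi> j. fst (b j))"

lemma re_matrix_Pair [simp]: "re_matrix (\<lambda>i. (e i, 0)) = (\<chi> i. e i)"
  by (simp add: re_matrix_def)

lemma fst_sum_smul: "fst (\<Sum>k\<in>UNIV. smul (c k) (b k)) = (\<Sum>k\<in>UNIV. fst (c k) *\<^sub>R fst (b k))"
  by (simp add: fst_sum)

lemma re_matrix_change:
  assumes "\<forall>j. b' j = (\<Sum>k\<in>UNIV. smul (A j k) (b k))"
  shows "re_matrix b' = (\<chi> j k. fst (A j k)) ** re_matrix b"
  using assms by (simp add: re_matrix_def vec_eq_iff matrix_matrix_mult_def fst_sum_smul sum_component)

lemma dbasis_det_nonzero: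
  assumes "dbasis b"
  shows "det (re_matrix b) \<noteq> 0"
proof -
  have "\<exists>c. transpose (re_matrix b) *v c = v" for v
  proof -
    obtain c where "(v, 0) = (\<Sum>k\<in>UNIV. smul (c k) (b k))"
      using assms unfolding dbasis_def by blast
    then have "v = (\<Sum>k\<in>UNIV. fst (c k) *\<^sub>R fst (b k))"
      by (metis fst_conv fst_sum_smul)
    then have "transpose (re_matrix b) *v (\<chi> k. fst (c k)) = v"
      by (simp add: vec_eq_iff matrix_vector_mult_def transpose_def re_matrix_def sum_component
          mult.commute)
    then show ?thesis by blast
  qed
  then have "surj (\<lambda>c. transpose (re_matrix b) *v c)"
    by (metis surjI)
  then have "invertible (transpose (re_matrix b))"
    using matrix_right_invertible_surjective invertible_right_inverse by blast
  then show ?thesis by (simp add: invertible_det_nz)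
qed

lemma oequiv_iff_det:
  assumes b: "dbasis b" and b': "dbasis b'"
  shows "oequiv b' b \<longleftrightarrow> det (re_matrix b') * det (re_matrix b) > 0"
proof -
  have sq: "det (re_matrix b) * det (re_matrix b) > 0"
    using dbasis_det_nonzero[OF b] not_real_square_gt_zero by blast
  have det_change: "det (re_matrix b') = det (\<chi> j k. fst (A j k)) * det (re_matrix b)"
    if "\<forall>j. b' j = (\<Sum>k\<in>UNIV. smul (A j k) (b k))" for A
    using re_matrix_change[OF that] by (simp add: det_mul)
  have "\<forall>j. \<exists>c. b' j = (\<Sum>k\<in>UNIV. smul (c k) (b k))"
    using b unfolding dbasis_def by blast
  then obtain A where A: "\<forall>j. b' j = (\<Sum>k\<in>UNIV. smul (A j k) (b k))"
    by metis
  have "oequiv b' b \<longleftrightarrow> det (\<chi> j k. fst (A j k)) > 0"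
  proof
    assume "oequiv b' b"
    then obtain A' where A': "\<forall>j. b' j = (\<Sum>k\<in>UNIV. smul (A' j k) (b k))"
      and pos: "det (\<chi> j k. fst (A' j k)) > 0"
      unfolding oequiv_def by blast
    have "det (\<chi> j k. fst (A j k)) * det (re_matrix b) = det (\<chi> j k. fst (A' j k)) * det (re_matrix b)"
      using det_change[OF A, symmetric] det_change[OF A'] by simp
    then have "det (\<chi> j k. fst (A j k)) = det (\<chi> j k. fst (A' j k))"
      using dbasis_det_nonzero[OF b] by simp
    then show "det (\<chi> j k. fst (A j k)) > 0"
      using pos by simp
  qed (use A in \<open>auto simp: oequiv_def\<close>)
  also have "\<dots> \<longleftrightarrow> det (\<chi> j k. fst (A j k)) * (det (re_matrix b) * det (re_matrix b)) > 0"
    using sq by (simp add: zero_less_mult_iff)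
  finally show ?thesis
    by (simp add: det_change[OF A] mult.assoc)
qed

lemma orientation_iff_det:
  assumes "orientation OR"
  obtains b where "dbasis b"
    and "\<And>b'. b' \<in> OR \<longleftrightarrow> dbasis b' \<and> det (re_matrix b') * det (re_matrix b) > 0"
proof -
  from assms obtain b where b: "dbasis b" and OR: "OR = {b'. dbasis b' \<and> oequiv b' b}"
    by (auto simp: orientation_def)
  show thesis
  proof (rule that[OF b])
    show "b' \<in> OR \<longleftrightarrow> dbasis b' \<and> det (re_matrix b') * det (re_matrix b) > 0" for b'
      using OR oequiv_iff_det[OF b, of b'] by auto
  qed
qed

section \<open>Scalar products and orthonormal frames\<close>

locale dual_scalar_product =
  fixes g :: "dmod \<Rightarrow> dmod \<Rightarrow> dual"
  assumes scalar_product: "scalar_product g"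
begin

lemma g_sym: "g x y = g y x"
  and g_add_left: "g (x + y) z = g x z + g y z"
  and g_smul_left: "g (smul c x) y = dmul c (g x y)"
  and g_re_nonneg: "0 \<le> fst (g x x)"
  and g_re_eq_0_iff: "fst (g x x) = 0 \<longleftrightarrow> x \<in> epsM"
  using scalar_product unfolding scalar_product_def by blast+

lemma g_scaleR_left: "g (c *\<^sub>R x) y = c *\<^sub>R g x y"
proof -
  have "c *\<^sub>R x = smul (c, 0) x" by (cases x) simp
  then show ?thesis by (simp add: g_smul_left scaleR_prod_def)
qed

definition vdu :: "real^3 \<Rightarrow> real^3 \<Rightarrow> real" where
  "vdu v w = snd (g (v, 0) (w, 0))"

lemma g_decomp:
  "g x y = (vin g (fst x) (fst y), vdu (fst x) (fst y) + vin g (snd x) (fst y) + vin g (fst x) (snd y))"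
proof -
  have g_left: "g x y = g (fst x, 0) y + dmul (0, 1) (g (snd x, 0) y)" for x y
  proof -
    have "g x y = g ((fst x, 0) + smul (0, 1) (snd x, 0)) y"
      by (cases x) simp
    then show ?thesis
      by (simp only: g_add_left g_smul_left)
  qed
  have g_right: "g x y = g x (fst y, 0) + dmul (0, 1) (g x (snd y, 0))" for x y
    using g_left[of y x] by (metis g_sym)
  show ?thesis
    by (subst g_left, subst g_right[of "(fst x, 0)"], subst g_right[of "(snd x, 0)"])
      (simp add: vin_def vdu_def prod_eq_iff)
qed

lemma vin_sym: "vin g v w = vin g w v"
  by (simp add: vin_def g_sym)

lemma vdu_sym: "vdu v w = vdu w v"
  by (simp add: vdu_def g_sym)

lemma vin_add_left: "vin g (u + v) w = vin g u w + vin g v w"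
  using g_add_left[of "(u, 0)" "(v, 0)" "(w, 0)"] by (simp add: vin_def)

lemma vin_scale_left: "vin g (c *\<^sub>R u) w = c * vin g u w"
  using g_scaleR_left[of c "(u, 0)" "(w, 0)"] by (simp add: vin_def)

lemma vdu_add_left: "vdu (u + v) w = vdu u w + vdu v w"
  using g_add_left[of "(u, 0)" "(v, 0)" "(w, 0)"] by (simp add: vdu_def)

lemma vdu_scale_left: "vdu (c *\<^sub>R u) w = c * vdu u w"
  using g_scaleR_left[of c "(u, 0)" "(w, 0)"] by (simp add: vdu_def)

lemma vin_add_right: "vin g w (u + v) = vin g w u + vin g w v"
  by (metis vin_sym vin_add_left)

lemma vin_scale_right: "vin g w (c *\<^sub>R u) = c * vin g w u"
  by (metis vin_sym vin_scale_left)

lemma vdu_add_right: "vdu w (u + v) = vdu w u + vdu w v"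
  by (metis vdu_sym vdu_add_left)

lemma vdu_scale_right: "vdu w (c *\<^sub>R u) = c * vdu w u"
  by (metis vdu_sym vdu_scale_left)

lemma vin_diff_right: "vin g w (u - v) = vin g w u - vin g w v"
  using vin_add_right[of w u "- v"] vin_scale_right[of w "- 1" v] by simp

lemma vin_sum_left: "vin g (\<Sum>i\<in>I. f i) w = (\<Sum>i\<in>I. vin g (f i) w)"
  by (induction I rule: infinite_finite_induct)
    (simp_all add: vin_add_left vin_scale_left[of 0, simplified])

lemma vin_sum_right: "vin g w (\<Sum>i\<in>I. f i) = (\<Sum>i\<in>I. vin g w (f i))"
  by (induction I rule: infinite_finite_induct)
    (simp_all add: vin_add_right vin_scale_right[of _ 0, simplified])

lemma vdu_sum_right: "vdu w (\<Sum>i\<in>I. f i) = (\<Sum>i\<in>I. vdu w (f i))"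
  by (induction I rule: infinite_finite_induct)
    (simp_all add: vdu_add_right vdu_scale_right[of _ 0, simplified])

lemma vin_pos: "v \<noteq> 0 \<Longrightarrow> vin g v v > 0"
  using g_re_nonneg[of "(v, 0)"] g_re_eq_0_iff[of "(v, 0)"] by (auto simp: vin_def epsM_iff)

definition vin_orthonormal :: "(3 \<Rightarrow> real^3) \<Rightarrow> bool" where
  "vin_orthonormal e \<longleftrightarrow> (\<forall>i j. vin g (e i) (e j) = (if i = j then 1 else 0))"

lemma vin_orthonormal_coeff:
  assumes "vin_orthonormal e"
  shows "vin g (\<Sum>k\<in>UNIV. a k *\<^sub>R e k) (e j) = a j"
proof -
  have "vin g (\<Sum>k\<in>UNIV. a k *\<^sub>R e k) (e j) = (\<Sum>k\<in>UNIV. if k = j then a k else 0)"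
    unfolding vin_sum_left vin_scale_left
    by (rule sum.cong) (use assms in \<open>auto simp: vin_orthonormal_def\<close>)
  then show ?thesis by simp
qed

lemma vin_orthonormal_expand:
  assumes "vin_orthonormal e"
  shows "v = (\<Sum>k\<in>UNIV. vin g v (e k) *\<^sub>R e k)"
proof -
  define f where "f c = (\<Sum>k\<in>UNIV. (c $ k) *\<^sub>R e k)" for c :: "real^3"
  have coeff: "vin g (f c) (e j) = c $ j" for c j
    unfolding f_def by (rule vin_orthonormal_coeff[OF assms])
  have "linear f" unfolding f_def
    by (rule linearI) (simp_all add: algebra_simps sum.distrib scaleR_sum_right)
  moreover have "inj f"
  proof (rule injI)
    fix a b
    assume "f a = f b"
    then have "vin g (f a) (e j) = vin g (f b) (e j)" for j
      by simp
    then show "a = b"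
      by (simp add: coeff vec_eq_iff)
  qed
  ultimately have "surj f"
    using linear_injective_imp_surjective by blast
  then obtain c where "v = f c"
    by blast
  then show ?thesis by (simp add: coeff) (simp add: f_def)
qed

lemma vin_orthonormal_inner:
  assumes "vin_orthonormal e"
  shows "vin g x y = (\<Sum>k\<in>UNIV. vin g x (e k) * vin g y (e k))"
proof -
  have "vin g x y = vin g x (\<Sum>k\<in>UNIV. vin g y (e k) *\<^sub>R e k)"
    using vin_orthonormal_expand[OF assms, of y] by simp
  then show ?thesis by (simp add: vin_sum_right vin_scale_right mult.commute)
qed

text \<open>Gram--Schmidt applied to the standard basis.\<close>

lemma vin_orthonormal_exists: "\<exists>e. vin_orthonormal e"
proof -
  define nv where "nv v = (1 / sqrt (vin g v v)) *\<^sub>R v" for v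
  have nv_unit: "vin g (nv v) (nv v) = 1" if "v \<noteq> 0" for v
    using vin_pos[OF that] by (simp add: nv_def vin_scale_left vin_scale_right field_simps)
  define a1 a2 a3 where "a1 = (axis 1 1 :: real^3)" and "a2 = (axis 2 1 :: real^3)"
    and "a3 = (axis 3 1 :: real^3)"
  define f1 where "f1 = nv a1"
  define v2 where "v2 = a2 - vin g a2 f1 *\<^sub>R f1"
  define f2 where "f2 = nv v2"
  define v3 where "v3 = a3 - vin g a3 f1 *\<^sub>R f1 - vin g a3 f2 *\<^sub>R f2"
  define f3 where "f3 = nv v3"
  have f1_23: "f1 $ 2 = 0" "f1 $ 3 = 0" by (simp_all add: f1_def nv_def a1_def axis_def)
  have f2_3: "f2 $ 3 = 0" by (simp add: f2_def nv_def v2_def f1_23 a2_def axis_def)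
  have "v2 $ 2 = 1" by (simp add: v2_def f1_23 a2_def axis_def)
  moreover have "v3 $ 3 = 1" by (simp add: v3_def f1_23 f2_3 a3_def axis_def)
  ultimately have "a1 \<noteq> 0" "v2 \<noteq> 0" "v3 \<noteq> 0" by (auto simp: a1_def)
  then have n1: "vin g f1 f1 = 1" and n2: "vin g f2 f2 = 1" and n3: "vin g f3 f3 = 1"
    by (simp_all add: f1_def f2_def f3_def nv_unit)
  have o12: "vin g f1 f2 = 0"
    by (simp add: f2_def nv_def vin_scale_right v2_def vin_diff_right n1 vin_sym[of a2])
  have o13: "vin g f1 f3 = 0"
    by (simp add: f3_def nv_def vin_scale_right v3_def vin_diff_right n1 o12 vin_sym[of a3])
  have o23: "vin g f2 f3 = 0"
    by (simp add: f3_def nv_def vin_scale_right v3_def vin_diff_right n2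
        o12[unfolded vin_sym[of f1]] vin_sym[of a3])
  define e where "e i = (if i = 1 then f1 else if i = 2 then f2 else f3)" for i :: 3
  have "vin_orthonormal e"
    unfolding vin_orthonormal_def
  proof (intro allI)
    fix i j :: 3
    show "vin g (e i) (e j) = (if i = j then 1 else 0)"
      using exhaust_3[of i] exhaust_3[of j]
      by (auto simp: e_def n1 n2 n3 o12 o13 o23 vin_sym[of f2 f1] vin_sym[of f3 f1] vin_sym[of f3 f2])
  qed
  then show ?thesis by blast
qed

lemma vin_orthonormal_dbasis:
  assumes "vin_orthonormal e"
  shows "dbasis (\<lambda>i. (e i, 0))"
  unfolding dbasis_def
proof (intro allI ex1I)
  fix m :: dmod
  have comb: "(\<Sum>k\<in>UNIV. smul (c k) (e k, 0)) =
      ((\<Sum>k\<in>UNIV. fst (c k) *\<^sub>R e k), (\<Sum>k\<in>UNIV. snd (c k) *\<^sub>R e k))" for c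
    by (simp add: prod_eq_iff fst_sum snd_sum)
  show "m = (\<Sum>k\<in>UNIV. smul ((\<lambda>k. (vin g (fst m) (e k), vin g (snd m) (e k))) k) (e k, 0))"
    unfolding comb using vin_orthonormal_expand[OF assms] by (simp add: prod_eq_iff)
  fix c
  assume "m = (\<Sum>k\<in>UNIV. smul (c k) (e k, 0))"
  then show "c = (\<lambda>k. (vin g (fst m) (e k), vin g (snd m) (e k)))"
    unfolding comb by (simp add: fun_eq_iff prod_eq_iff vin_orthonormal_coeff[OF assms])
qed

end

locale oriented_dual_scalar_product = dual_scalar_product +
  fixes OR :: "(3 \<Rightarrow> dmod) set"
  assumes orientation: "orientation OR"
begin

lemma pos_onb_iff: "pos_onb g OR e \<longleftrightarrow> vin_orthonormal e \<and> (\<lambda>i. (e i, 0)) \<in> OR"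
  by (simp add: pos_onb_def vin_orthonormal_def)

lemma pos_onb_exists: "\<exists>e. pos_onb g OR e"
proof -
  obtain b where b: "dbasis b"
    and OR: "\<And>b'. b' \<in> OR \<longleftrightarrow> dbasis b' \<and> det (re_matrix b') * det (re_matrix b) > 0"
    using orientation_iff_det[OF orientation] by blast
  obtain e where e: "vin_orthonormal e" using vin_orthonormal_exists by blast
  define e' where "e' = e(1 := - e 1)"
  have e': "vin_orthonormal e'"
    using e vin_scale_left[of "- 1"] vin_scale_right[of _ "- 1"]
    by (simp add: vin_orthonormal_def e'_def)
  have "det (\<chi> i. e' i) * det (re_matrix b) = - (det (\<chi> i. e i) * det (re_matrix b))"
    by (simp add: e'_def det_3 algebra_simps)
  moreover have "det (\<chi> i. e i) * det (re_matrix b) \<noteq> 0"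
    using dbasis_det_nonzero[OF vin_orthonormal_dbasis[OF e]] dbasis_det_nonzero[OF b] by simp
  ultimately have "det (\<chi> i. e i) * det (re_matrix b) > 0 \<or> det (\<chi> i. e' i) * det (re_matrix b) > 0"
    by linarith
  then show ?thesis
    using OR vin_orthonormal_dbasis e e' by (auto simp: pos_onb_iff)
qed

end

section \<open>Cross products in R^3\<close>

lemma levi_eq:
  "levi i j k =
    (if (i, j, k) \<in> {(1, 2, 3), (2, 3, 1), (3, 1, 2)} then 1
     else if (i, j, k) \<in> {(1, 3, 2), (3, 2, 1), (2, 1, 3)} then - 1 else 0)"
proof -
  have "levi 1 2 3 = 1" "levi 2 3 1 = 1" "levi 3 1 2 = 1"
    "levi 1 3 2 = - 1" "levi 3 2 1 = - 1" "levi 2 1 3 = - 1"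
    "levi i i k = 0" "levi i j i = 0" "levi i j j = 0"
    by (simp_all add: levi_def det_3 axis_def)
  then show ?thesis
    using exhaust_3[of i] exhaust_3[of j] exhaust_3[of k] by auto
qed

lemma cross_axis_levi:
  "c \<times> axis i 1 = (\<Sum>j\<in>UNIV. \<Sum>k\<in>UNIV. (levi i j k * c $ k) *\<^sub>R axis j (1::real))"
  using exhaust_3[of i]
  by (auto simp: levi_eq sum_3 cross3_def vec_eq_iff forall_3 axis_def vector_def)

lemma orthogonal_matrix_of_rows:
  fixes f :: "'n::finite \<Rightarrow> real^'n"
  assumes "\<And>i j. f i \<bullet> f j = (if i = j then 1 else 0)"
  shows "orthogonal_matrix (\<chi> i. f i)"
proof -
  have "(\<chi> i. f i) ** transpose (\<chi> i. f i) = mat 1"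
    using assms by (simp add: vec_eq_iff matrix_matrix_mult_def transpose_def mat_def inner_vec_def)
  then show ?thesis
    using matrix_left_right_inverse orthogonal_matrix_def by blast
qed

lemma cross_frame_levi:
  fixes f :: "3 \<Rightarrow> real^3"
  assumes rot: "rotation_matrix (\<chi> i. f i)"
  shows "c \<times> f i = (\<Sum>j\<in>UNIV. \<Sum>k\<in>UNIV. (levi i j k * (c \<bullet> f k)) *\<^sub>R f j)"
proof -
  define F :: "real^3^3" where "F = (\<chi> i. f i)"
  have Q: "rotation_matrix (transpose F)"
    using rot by (simp add: F_def rotation_matrix_def)
  have QF: "transpose F ** F = mat 1"
    using rot by (simp add: F_def rotation_matrix_def orthogonal_matrix_def)
  have Qa: "transpose F *v axis j 1 = f j" for j
    by (simp add: F_def vec_eq_iff matrix_vector_mult_def transpose_def axis_def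
        if_distrib cong: if_cong)
  have c: "c = transpose F *v (F *v c)"
    by (simp add: matrix_vector_mul_assoc QF)
  have Fc: "(F *v c) $ k = c \<bullet> f k" for k
    by (simp add: F_def matrix_vector_mult_def inner_vec_def mult.commute)
  have "c \<times> f i = (transpose F *v (F *v c)) \<times> (transpose F *v axis i 1)"
    by (simp only: Qa c[symmetric])
  also have "\<dots> = transpose F *v ((F *v c) \<times> axis i 1)"
    using cross_rotation_matrix[OF Q] by simp
  also have "\<dots> = (\<Sum>j\<in>UNIV. \<Sum>k\<in>UNIV. (levi i j k * (F *v c) $ k) *\<^sub>R (transpose F *v axis j 1))"
    by (simp add: cross_axis_levi linear_sum[OF matrix_vector_mul_linear] matrix_vector_mult_scaleR)
  finally show ?thesis by (simp only: Qa Fc)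
qed

lemma cross_eq_0_imp_parallel:
  fixes a v :: "real^3"
  assumes "a \<noteq> 0" "v \<times> a = 0"
  shows "v = ((v \<bullet> a) / (a \<bullet> a)) *\<^sub>R a"
proof -
  have "(a \<bullet> a) *\<^sub>R v = (a \<bullet> v) *\<^sub>R a"
    using Lagrange[of a v a] assms(2) by simp
  then have "(1 / (a \<bullet> a)) *\<^sub>R ((a \<bullet> a) *\<^sub>R v) = (1 / (a \<bullet> a)) *\<^sub>R ((a \<bullet> v) *\<^sub>R a)"
    by simp
  then show ?thesis
    using assms(1) by (simp add: inner_commute)
qed

lemma cross_eq_cross_iff:
  fixes x w w1 :: "real^3"
  assumes "x \<noteq> 0"
  shows "w \<times> x = w1 \<times> x \<longleftrightarrow> (\<exists>s. w = w1 + s *\<^sub>R x)"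
proof
  assume "w \<times> x = w1 \<times> x"
  then have "(w - w1) \<times> x = 0"
    by (simp add: Cross3.left_diff_distrib)
  then have "w - w1 = ((w - w1) \<bullet> x / (x \<bullet> x)) *\<^sub>R x"
    using cross_eq_0_imp_parallel[OF assms] by blast
  then show "\<exists>s. w = w1 + s *\<^sub>R x"
    by (metis add.commute diff_add_cancel)
qed (auto simp: cross_add_left cross_mult_left)

lemma exists_cross_eq:
  fixes d m :: "real^3"
  assumes "d \<noteq> 0" "m \<bullet> d = 0"
  shows "\<exists>w. w \<times> d = m"
proof
  have "(d \<times> m) \<times> d = (d \<bullet> d) *\<^sub>R m - (m \<bullet> d) *\<^sub>R d"
    by (simp add: cross3_simps forall_3)
  then show "((1 / (d \<bullet> d)) *\<^sub>R (d \<times> m)) \<times> d = m"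
    using assms by (simp add: cross_mult_left)
qed

lemma orthogonal_in_span2:
  fixes x1 x2 d v :: "real^3"
  assumes n: "x1 \<times> x2 \<noteq> 0" and d: "d \<noteq> 0"
    and "x1 \<bullet> d = 0" "x2 \<bullet> d = 0" "v \<bullet> d = 0"
  shows "\<exists>\<alpha> \<beta>. v = \<alpha> *\<^sub>R x1 + \<beta> *\<^sub>R x2"
proof -
  define n where "n = x1 \<times> x2"
  have "n \<times> d = 0"
    using Lagrange[of d x1 x2] assms(3,4) cross_skew[of n d] by (simp add: n_def inner_commute)
  then have "n = ((n \<bullet> d) / (d \<bullet> d)) *\<^sub>R d"
    using cross_eq_0_imp_parallel[OF d] by blast
  then have vn: "v \<bullet> n = 0"
    using assms(5) by (metis inner_scaleR_right mult_zero_right)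
  have "(n \<bullet> n) *\<^sub>R v = ((v \<times> x2) \<bullet> n) *\<^sub>R x1 + ((x1 \<times> v) \<bullet> n) *\<^sub>R x2 + (v \<bullet> n) *\<^sub>R n"
    by (simp add: n_def cross3_simps forall_3)
  then have "(1 / (n \<bullet> n)) *\<^sub>R ((n \<bullet> n) *\<^sub>R v) =
      (1 / (n \<bullet> n)) *\<^sub>R (((v \<times> x2) \<bullet> n) *\<^sub>R x1 + ((x1 \<times> v) \<bullet> n) *\<^sub>R x2)"
    using vn by simp
  then have "v = ((v \<times> x2) \<bullet> n / (n \<bullet> n)) *\<^sub>R x1 + ((x1 \<times> v) \<bullet> n / (n \<bullet> n)) *\<^sub>R x2"
    using n by (simp add: n_def scaleR_add_right)
  then show ?thesis by blast
qed

lemma lines_meet_iff: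
  fixes p q a b :: "real^3"
  assumes "a \<times> b \<noteq> 0"
  shows "(\<exists>s t. p + s *\<^sub>R a = q + t *\<^sub>R b) \<longleftrightarrow> (p - q) \<bullet> (a \<times> b) = 0"
proof
  assume "\<exists>s t. p + s *\<^sub>R a = q + t *\<^sub>R b"
  then obtain s t where "p - q = t *\<^sub>R b - s *\<^sub>R a"
    by (metis add.commute add_diff_cancel_left)
  then show "(p - q) \<bullet> (a \<times> b) = 0"
    by (simp add: inner_diff_left dot_cross_self)
next
  assume "(p - q) \<bullet> (a \<times> b) = 0"
  then obtain \<alpha> \<beta> where "p - q = \<alpha> *\<^sub>R a + \<beta> *\<^sub>R b"
    using orthogonal_in_span2[OF assms assms dot_cross_self(1) dot_cross_self(2)] by blast
  then have "p + (- \<alpha>) *\<^sub>R a = q + \<beta> *\<^sub>R b"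
    by (simp add: algebra_simps)
  then show "\<exists>s t. p + s *\<^sub>R a = q + t *\<^sub>R b" by blast
qed

lemma skew_columns_cross:
  fixes t :: "3 \<Rightarrow> real^3"
  assumes skew: "\<And>j k. t k $ j = - (t j $ k)"
  shows "\<exists>w. \<forall>k. w \<times> axis k 1 = t k"
proof
  have "t 1 $ 1 = 0" "t 2 $ 2 = 0" "t 3 $ 3 = 0"
    "t 1 $ 3 = - (t 3 $ 1)" "t 2 $ 1 = - (t 1 $ 2)" "t 3 $ 2 = - (t 2 $ 3)"
    using skew[of 1 1] skew[of 2 2] skew[of 3 3] skew[of 3 1] skew[of 1 2] skew[of 2 3] by auto
  then show "\<forall>k. vector [t 2 $ 3, t 3 $ 1, t 1 $ 2] \<times> axis k 1 = t k"
    using exhaust_3 by (auto simp: cross3_def vec_eq_iff forall_3 axis_def)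
qed

lemma cross_sum_right: "w \<times> (\<Sum>k\<in>I. f k) = (\<Sum>k\<in>I. w \<times> f k)"
  by (induction I rule: infinite_finite_induct) (simp_all add: cross_add_right)

lemma skew_linear_eq_cross:
  fixes T :: "real^3 \<Rightarrow> real^3"
  assumes T: "linear T" and skew: "\<And>a b. a \<bullet> T b + T a \<bullet> b = 0"
  obtains w where "\<And>a. T a = w \<times> a"
proof -
  have "T (axis k 1) $ j = - (T (axis j 1) $ k)" for j k
    using skew[of "axis j 1" "axis k 1"] by (simp add: inner_axis inner_axis')
  then obtain w where w: "\<And>k. w \<times> axis k 1 = T (axis k 1)"
    using skew_columns_cross[of "\<lambda>k. T (axis k 1)"] by blast
  have "T a = w \<times> a" for a
  proof -
    have "T a = T (\<Sum>k\<in>UNIV. a $ k *\<^sub>R axis k 1)" "w \<times> a = w \<times> (\<Sum>k\<in>UNIV. a $ k *\<^sub>R axis k 1)"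
      using basis_expansion[of a] by (simp_all add: scalar_mult_eq_scaleR)
    then show ?thesis
      by (simp add: linear_sum[OF T] linear_scale[OF T] w cross_sum_right cross_mult_right)
  qed
  then show thesis
    using that by blast
qed

section \<open>The standard scalar product on D^3\<close>

definition ddot :: "dmod \<Rightarrow> dmod \<Rightarrow> dual" where
  "ddot X Y = (fst X \<bullet> fst Y, fst X \<bullet> snd Y + snd X \<bullet> fst Y)"

lemma ddot_dcomb_left:
  "ddot (smul a X1 + smul b X2) Y = dmul a (ddot X1 Y) + dmul b (ddot X2 Y)"
  by (simp add: ddot_def inner_add_left algebra_simps)

lemma dindep_imp_cross_nonzero:
  assumes indep: "\<forall>a b. smul a X1 + smul b X2 = 0 \<longrightarrow> a = 0 \<and> b = 0"
  shows "fst X1 \<times> fst X2 \<noteq> 0"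
proof
  assume cross: "fst X1 \<times> fst X2 = 0"
  have "fst X1 \<noteq> 0"
  proof
    assume "fst X1 = 0"
    then have "smul (0, 1) X1 + smul 0 X2 = 0"
      by (simp add: prod_eq_iff zero_prod_def)
    then have "((0::real), (1::real)) = 0"
      using indep by blast
    then show False by (simp add: zero_prod_def)
  qed
  moreover have "fst X2 \<times> fst X1 = 0"
    using cross cross_skew[of "fst X2" "fst X1"] by simp
  ultimately obtain c where "fst X2 = c *\<^sub>R fst X1"
    using cross_eq_0_imp_parallel by blast
  then have "smul (0, - c) X1 + smul (0, 1) X2 = 0"
    by (simp add: prod_eq_iff)
  then have "((0::real), (1::real)) = 0"
    using indep by blast
  then show False by (simp add: zero_prod_def)
qed

lemma common_line_exists:
  assumes n: "fst X1 \<times> fst X2 \<noteq> 0"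
  shows "\<exists>w d. d \<noteq> 0 \<and> ddot X1 (d, w \<times> d) = 0 \<and> ddot X2 (d, w \<times> d) = 0"
proof -
  obtain x1 y1 x2 y2 where X: "X1 = (x1, y1)" "X2 = (x2, y2)" by fastforce
  define n where "n = x1 \<times> x2"
  define N where "N = n \<bullet> n"
  have N: "N \<noteq> 0" using n by (simp add: N_def n_def X)
  \<comment> \<open>x2 \<times> n and n \<times> x1 are orthogonal to n and dual to x1, x2; m combines them so
    that both dual parts vanish\<close>
  define m where "m = - (1 / N) *\<^sub>R ((y1 \<bullet> n) *\<^sub>R (x2 \<times> n) + (y2 \<bullet> n) *\<^sub>R (n \<times> x1))"
  have "x1 \<bullet> (x2 \<times> n) = N" "x2 \<bullet> (n \<times> x1) = N"
    by (simp_all add: N_def n_def cross3_simps)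
  then have x1m: "x1 \<bullet> m = - (y1 \<bullet> n)" and x2m: "x2 \<bullet> m = - (y2 \<bullet> n)"
    using N by (simp_all add: m_def inner_add_right dot_cross_self)
  have "m \<bullet> n = 0" by (simp add: m_def inner_add_left dot_cross_self)
  moreover have "n \<noteq> 0"
    using n by (simp add: n_def X)
  ultimately obtain w where w: "w \<times> n = m"
    using exists_cross_eq by blast
  have "x1 \<bullet> n = 0" "x2 \<bullet> n = 0"
    by (simp_all add: n_def dot_cross_self)
  then have "ddot X1 (n, w \<times> n) = 0" "ddot X2 (n, w \<times> n) = 0"
    using x1m x2m by (simp_all add: ddot_def X w zero_prod_def inner_commute)
  then show ?thesis
    using n X n_def by auto
qed

lemma dspan_of_common_line:
  assumes n: "fst X1 \<times> fst X2 \<noteq> 0" and d: "d \<noteq> 0"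
    and orth: "ddot X1 (d, m) = 0" "ddot X2 (d, m) = 0" "ddot X3 (d, m) = 0"
  shows "\<exists>a b. X3 = smul a X1 + smul b X2"
proof -
  obtain x1 y1 x2 y2 x3 y3 where X: "X1 = (x1, y1)" "X2 = (x2, y2)" "X3 = (x3, y3)"
    by fastforce
  have xd: "x1 \<bullet> d = 0" "x2 \<bullet> d = 0" "x3 \<bullet> d = 0"
    and yd: "y1 \<bullet> d = - (x1 \<bullet> m)" "y2 \<bullet> d = - (x2 \<bullet> m)" "y3 \<bullet> d = - (x3 \<bullet> m)"
    using orth by (simp_all add: ddot_def X zero_prod_def eq_neg_iff_add_eq_0)
  have n': "x1 \<times> x2 \<noteq> 0" using n X by simp
  obtain a0 b0 where x3: "x3 = a0 *\<^sub>R x1 + b0 *\<^sub>R x2"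
    using orthogonal_in_span2[OF n' d xd] by blast
  have "(y3 - a0 *\<^sub>R y1 - b0 *\<^sub>R y2) \<bullet> d = 0"
    by (simp add: inner_diff_left yd x3 inner_add_left)
  then obtain a1 b1 where "y3 - a0 *\<^sub>R y1 - b0 *\<^sub>R y2 = a1 *\<^sub>R x1 + b1 *\<^sub>R x2"
    using orthogonal_in_span2[OF n' d xd(1,2)] by blast
  then have "X3 = smul (a0, a1) X1 + smul (b0, b1) X2"
    using x3 by (simp add: X prod_eq_iff algebra_simps)
  then show ?thesis by blast
qed

lemma dspan_iff_common_line:
  assumes n: "fst X1 \<times> fst X2 \<noteq> 0"
  shows "(\<exists>a b. X3 = smul a X1 + smul b X2) \<longleftrightarrow>
    (\<exists>w d. d \<noteq> 0 \<and> ddot X1 (d, w \<times> d) = 0 \<and> ddot X2 (d, w \<times> d) = 0 \<and> ddot X3 (d, w \<times> d) = 0)"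
proof
  assume "\<exists>a b. X3 = smul a X1 + smul b X2"
  then obtain a b where X3: "X3 = smul a X1 + smul b X2"
    by blast
  obtain w d where "d \<noteq> 0" "ddot X1 (d, w \<times> d) = 0" "ddot X2 (d, w \<times> d) = 0"
    using common_line_exists[OF n] by blast
  moreover have "ddot X3 (d, w \<times> d) = 0"
    using calculation by (simp add: X3 ddot_dcomb_left zero_prod_def)
  ultimately show "\<exists>w d. d \<noteq> 0 \<and> ddot X1 (d, w \<times> d) = 0 \<and> ddot X2 (d, w \<times> d) = 0 \<and> ddot X3 (d, w \<times> d) = 0"
    by blast
qed (use dspan_of_common_line[OF n] in blast)

text \<open>The factorisation z = (a + \<epsilon> b) u of the axis definition, computed in the model:
  dsgn X is the unit u and a = norm (fst X).\<close>

definition dsgn :: "dmod \<Rightarrow> dmod" where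
  "dsgn X = ((1 / norm (fst X)) *\<^sub>R fst X,
    (1 / norm (fst X)) *\<^sub>R (snd X - (fst X \<bullet> snd X / (fst X \<bullet> fst X)) *\<^sub>R fst X))"

lemma dsgn_Pair:
  assumes "x \<noteq> 0"
  obtains n v where "norm x = n" "n \<noteq> 0" "x \<bullet> x = n * n" "x \<bullet> v = 0"
    "v = y - (x \<bullet> y / (x \<bullet> x)) *\<^sub>R x" "dsgn (x, y) = ((1 / n) *\<^sub>R x, (1 / n) *\<^sub>R v)"
proof
  show "norm x \<noteq> 0" "x \<bullet> x = norm x * norm x"
    using assms by (simp_all add: dot_square_norm power2_eq_square)
  show "x \<bullet> (y - (x \<bullet> y / (x \<bullet> x)) *\<^sub>R x) = 0"
    using assms by (simp add: inner_diff_right)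
qed (simp_all add: dsgn_def)

lemma ddot_dsgn:
  assumes "fst X \<noteq> 0"
  shows "ddot (dsgn X) (dsgn X) = (1, 0)"
proof -
  obtain x y where X: "X = (x, y)"
    by fastforce
  obtain n v where "n \<noteq> 0" "x \<bullet> x = n * n" "x \<bullet> v = 0"
    and "dsgn X = ((1 / n) *\<^sub>R x, (1 / n) *\<^sub>R v)"
    using dsgn_Pair[of x y] assms X by auto
  then show ?thesis
    by (simp add: ddot_def inner_commute[of v x])
qed

lemma smul_dsgn:
  assumes "fst X \<noteq> 0"
  shows "smul (norm (fst X), fst X \<bullet> snd X / norm (fst X)) (dsgn X) = X"
proof -
  obtain x y where X: "X = (x, y)"
    by fastforce
  obtain n v where "norm x = n" "n \<noteq> 0" "x \<bullet> x = n * n" "v = y - (x \<bullet> y / (x \<bullet> x)) *\<^sub>R x"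
    and "dsgn X = ((1 / n) *\<^sub>R x, (1 / n) *\<^sub>R v)"
    using dsgn_Pair[of x y] assms X by auto
  then show ?thesis
    by (simp add: X)
qed

lemma dsgn_smul_unit:
  assumes U: "ddot U U = (1, 0)" and a: "a > 0"
  shows "dsgn (smul (a, b) U) = U"
proof -
  obtain p q where Upq: "U = (p, q)"
    by fastforce
  have pp: "p \<bullet> p = 1" and pq: "p \<bullet> q = 0"
    using U by (simp_all add: Upq ddot_def inner_commute)
  have "norm p = 1"
    using pp by (simp add: norm_eq_sqrt_inner)
  then show ?thesis
    using a pp pq by (simp add: Upq dsgn_def inner_add_right algebra_simps)
qed

section \<open>The coordinate model\<close>

locale dual_frame = oriented_dual_scalar_product +
  fixes e0 :: "3 \<Rightarrow> real^3"
  assumes e0: "pos_onb g OR e0"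
begin

lemma e0_orthonormal: "vin_orthonormal e0"
  using e0 pos_onb_iff by blast

definition coord :: "real^3 \<Rightarrow> real^3" where
  "coord v = (\<chi> i. vin g v (e0 i))"

definition coord_inv :: "real^3 \<Rightarrow> real^3" where
  "coord_inv c = (\<Sum>i\<in>UNIV. c $ i *\<^sub>R e0 i)"

definition du_shift :: "real^3 \<Rightarrow> real^3" where
  "du_shift v = (\<chi> i. vdu v (e0 i) / 2)"

lemma coord_inv_coord [simp]: "coord_inv (coord v) = v"
  using vin_orthonormal_expand[OF e0_orthonormal, of v] by (simp add: coord_inv_def coord_def)

lemma coord_coord_inv [simp]: "coord (coord_inv c) = c"
  by (simp add: coord_def coord_inv_def vin_orthonormal_coeff[OF e0_orthonormal] vec_eq_iff)

lemma coord_inj: "coord v = coord w \<longleftrightarrow> v = w"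
  by (metis coord_inv_coord)

lemma vin_coord: "vin g v w = coord v \<bullet> coord w"
  using vin_orthonormal_inner[OF e0_orthonormal, of v w] by (simp add: coord_def inner_vec_def)

lemma coord_e0: "coord (e0 i) = axis i 1"
  using e0_orthonormal by (simp add: coord_def vin_orthonormal_def vec_eq_iff axis_def)

lemma coord_add: "coord (v + w) = coord v + coord w"
  by (simp add: coord_def vec_eq_iff vin_add_left)

lemma coord_scale: "coord (c *\<^sub>R v) = c *\<^sub>R coord v"
  by (simp add: coord_def vec_eq_iff vin_scale_left)

lemma du_shift_add: "du_shift (v + w) = du_shift v + du_shift w"
  by (simp add: du_shift_def vec_eq_iff vdu_add_left add_divide_distrib)

lemma du_shift_scale: "du_shift (c *\<^sub>R v) = c *\<^sub>R du_shift v"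
  by (simp add: du_shift_def vec_eq_iff vdu_scale_left)

lemma coord_0 [simp]: "coord 0 = 0"
  using coord_scale[of 0 0] by simp

lemma du_shift_0 [simp]: "du_shift 0 = 0"
  using du_shift_scale[of 0 0] by simp

lemma coord_sum: "coord (\<Sum>i\<in>I. f i) = (\<Sum>i\<in>I. coord (f i))"
  by (induction I rule: infinite_finite_induct) (simp_all add: coord_add)

lemma coord_inv_eq_0_iff: "coord_inv c = 0 \<longleftrightarrow> c = 0"
  by (metis coord_0 coord_coord_inv coord_inv_coord)

lemma coord_eq_0_iff: "coord v = 0 \<longleftrightarrow> v = 0"
  using coord_inj[of v 0] by simp

lemma coord_inner_du_shift: "coord v \<bullet> du_shift w = vdu w v / 2"
proof -
  have "coord v \<bullet> du_shift w = vdu w (\<Sum>i\<in>UNIV. vin g v (e0 i) *\<^sub>R e0 i) / 2"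
    by (simp add: coord_def du_shift_def inner_vec_def sum_divide_distrib vdu_sum_right
        vdu_scale_right)
  then show ?thesis
    using vin_orthonormal_expand[OF e0_orthonormal, of v] by simp
qed

text \<open>Coordinates in e0, with the dual part shifted by du_shift so that g becomes ddot
  (g_model).\<close>

definition model :: "dmod \<Rightarrow> dmod" where
  "model x = (coord (fst x), coord (snd x) + du_shift (fst x))"

definition model_inv :: "dmod \<Rightarrow> dmod" where
  "model_inv X = (coord_inv (fst X), coord_inv (snd X - du_shift (coord_inv (fst X))))"

lemma model_model_inv [simp]: "model (model_inv X) = X"
  by (simp add: model_def model_inv_def)

lemma model_inv_model [simp]: "model_inv (model x) = x"
  by (simp add: model_def model_inv_def)

lemma model_inj: "model x = model y \<longleftrightarrow> x = y"
  by (metis model_inv_model)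

lemma fst_model: "fst (model x) = coord (fst x)"
  by (simp add: model_def)

lemma model_add: "model (x + y) = model x + model y"
  by (simp add: model_def coord_add du_shift_add)

lemma model_smul: "model (smul c x) = smul c (model x)"
  by (simp add: model_def smul_def coord_add du_shift_add coord_scale du_shift_scale algebra_simps)

lemma model_scaleR: "model (c *\<^sub>R x) = c *\<^sub>R model x"
  by (simp add: model_def coord_scale du_shift_scale scaleR_add_right)

lemma model_linear: "linear model"
  by (rule linearI) (simp_all add: model_add model_scaleR)

lemma model_0 [simp]: "model 0 = 0"
  using linear_0[OF model_linear] .

lemma model_dcomb: "model (smul a x + smul b y) = smul a (model x) + smul b (model y)"
  by (simp add: model_add model_smul)

lemma g_model: "g x y = ddot (model x) (model y)"
  by (simp add: g_decomp ddot_def model_def vin_coord inner_add_left inner_add_right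
      coord_inner_du_shift inner_commute[of "du_shift _"] vdu_sym[of "fst y"])

lemma epsM_model: "x \<in> epsM \<longleftrightarrow> fst (model x) = 0"
  by (simp add: epsM_iff fst_model coord_eq_0_iff)

lemma model_dindep:
  assumes "\<forall>a b. smul a x + smul b y = 0 \<longrightarrow> a = 0 \<and> b = 0"
  shows "\<forall>a b. smul a (model x) + smul b (model y) = 0 \<longrightarrow> a = 0 \<and> b = 0"
proof (intro allI impI)
  fix a b
  assume "smul a (model x) + smul b (model y) = 0"
  then have "model (smul a x + smul b y) = model 0"
    by (simp add: model_dcomb)
  then have "smul a x + smul b y = 0"
    by (simp only: model_inj)
  then show "a = 0 \<and> b = 0"
    using assms by blast
qed

lemma model_dspan_iff:
  "(\<exists>a b. z = smul a x + smul b y) \<longleftrightarrow> (\<exists>a b. model z = smul a (model x) + smul b (model y))"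
  by (simp only: model_dcomb[symmetric] model_inj)

section \<open>The affine space E\<close>

text \<open>E is identified with R^3: the point w is the graph of a \<mapsto> w \<times> a in the model.\<close>

definition Epoint :: "real^3 \<Rightarrow> dmod set" where
  "Epoint w = {x. snd (model x) = w \<times> fst (model x)}"

definition Epoint_vec :: "real^3 \<Rightarrow> real^3 \<Rightarrow> dmod" where
  "Epoint_vec w a = model_inv (a, w \<times> a)"

lemma mem_Epoint: "x \<in> Epoint w \<longleftrightarrow> snd (model x) = w \<times> fst (model x)"
  by (simp add: Epoint_def)

lemma model_Epoint_vec [simp]: "model (Epoint_vec w a) = (a, w \<times> a)"
  by (simp add: Epoint_vec_def)

lemma Epoint_eq_range: "Epoint w = range (Epoint_vec w)"
proof (intro equalityI subsetI)
  fix x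
  assume "x \<in> Epoint w"
  then have "model x = model (Epoint_vec w (fst (model x)))"
    by (simp add: mem_Epoint prod_eq_iff)
  then have "x = Epoint_vec w (fst (model x))"
    by (simp only: model_inj)
  then show "x \<in> range (Epoint_vec w)"
    by (rule image_eqI) simp
qed (auto simp: mem_Epoint)

lemma Epoint_vec_linear: "linear (Epoint_vec w)"
proof (rule linearI)
  show "Epoint_vec w (a + b) = Epoint_vec w a + Epoint_vec w b" for a b
    by (subst model_inj[symmetric]) (simp add: model_add cross_add_right)
  show "Epoint_vec w (c *\<^sub>R a) = c *\<^sub>R Epoint_vec w a" for c a
    by (subst model_inj[symmetric]) (simp add: model_scaleR cross_mult_right)
qed

lemma inE_Epoint: "inE g (Epoint w)"
  unfolding inE_def
proof (intro conjI)
  show "subspace (Epoint w)"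
    unfolding Epoint_eq_range by (rule linear_subspace_image[OF Epoint_vec_linear subspace_UNIV])
  have "inj (Epoint_vec w)"
    by (rule inj_on_inverseI[of _ "\<lambda>x. fst (model x)"]) simp
  then have "dim (Epoint w) = dim (UNIV :: (real^3) set)"
    unfolding Epoint_eq_range
    by (intro eucl.dim_image_eq[OF Epoint_vec_linear]) (auto intro: inj_on_subset)
  then show "dim (Epoint w) = 3" by simp
  have "a \<bullet> (w \<times> b) + (w \<times> a) \<bullet> b = 0" for a b :: "real^3"
    by (simp add: cross3_simps)
  then show "\<forall>x\<in>Epoint w. \<forall>y\<in>Epoint w. snd (g x y) = 0"
    by (simp add: mem_Epoint g_model ddot_def)
  have "x = 0" if "x \<in> Epoint w" "x \<in> epsM" for x
  proof -
    have "model x = model 0"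
      using that by (simp add: mem_Epoint epsM_model prod_eq_iff)
    then show ?thesis by (simp only: model_inj)
  qed
  then show "Epoint w \<inter> epsM = {0}"
    by (auto simp: mem_Epoint epsM_model)
qed

lemma inE_fst_model_bij:
  assumes "inE g P"
  shows "bij_betw (\<lambda>x. fst (model x)) P UNIV"
proof -
  have sub: "subspace P" and dimP: "dim P = 3" and eps: "P \<inter> epsM = {0}"
    using assms unfolding inE_def by blast+
  define h where "h = (\<lambda>x. fst (model x))"
  have h: "linear h"
    unfolding h_def by (rule linearI) (simp_all add: model_add model_scaleR)
  have "inj_on h P"
  proof (rule inj_onI)
    fix x y
    assume "x \<in> P" "y \<in> P" "h x = h y"
    then have "x - y \<in> P" "h (x - y) = 0"
      by (simp_all add: subspace_diff[OF sub] linear_diff[OF h])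
    then have "x - y \<in> P \<inter> epsM"
      by (simp add: epsM_model h_def)
    then show "x = y" using eps by simp
  qed
  moreover have "h ` P = UNIV"
  proof -
    have span_P: "span P = P"
      using sub by (simp add: span_eq_iff)
    have "dim (h ` P) = dim P"
      using \<open>inj_on h P\<close> by (intro eucl.dim_image_eq[OF h]) (simp add: span_P)
    then have "dim (h ` P) = DIM(real^3)"
      using dimP by simp
    then have "span (h ` P) = UNIV"
      using eucl.dim_eq_full by blast
    moreover have "span (h ` P) = h ` P"
      using sub h by (simp add: span_eq_iff linear_subspace_image)
    ultimately show ?thesis by simp
  qed
  ultimately show ?thesis
    unfolding bij_betw_def h_def by blast
qed

text \<open>Isotropy of P makes the dual part of the model a skew-symmetric linear function of the
  real part, i.e. a cross product.\<close>

lemma inE_imp_Epoint: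
  assumes P: "inE g P"
  obtains w where "P = Epoint w"
proof -
  have sub: "subspace P" and iso: "\<And>x y. x \<in> P \<Longrightarrow> y \<in> P \<Longrightarrow> snd (g x y) = 0"
    using P unfolding inE_def by blast+
  have bij: "bij_betw (\<lambda>x. fst (model x)) P UNIV"
    by (rule inE_fst_model_bij[OF P])
  define q where "q k = inv_into P (\<lambda>x. fst (model x)) (axis k 1)" for k
  have q: "q k \<in> P" "fst (model (q k)) = axis k 1" for k
    using bij by (simp_all add: q_def bij_betw_def inv_into_into
        f_inv_into_f[where f = "\<lambda>x. fst (model x)"])
  define comb where "comb a = (\<Sum>k\<in>UNIV. a $ k *\<^sub>R q k)" for a
  have comb_P: "comb a \<in> P" for a
    unfolding comb_def using sub q(1) by (intro subspace_sum) (auto intro: subspace_scale)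
  have model_comb: "model (comb a) = (\<Sum>k\<in>UNIV. a $ k *\<^sub>R model (q k))" for a
    by (simp add: comb_def linear_sum[OF model_linear] model_scaleR)
  have fst_comb: "fst (model (comb a)) = a" for a
    using basis_expansion[of a] by (simp add: model_comb fst_sum q(2) scalar_mult_eq_scaleR)
  define T where "T a = snd (model (comb a))" for a
  have "linear T"
    by (rule linearI) (simp_all add: T_def model_comb snd_sum scaleR_add_left sum.distrib
        scaleR_sum_right)
  moreover have "a \<bullet> T b + T a \<bullet> b = 0" for a b
    using iso[OF comb_P comb_P, of a b] by (simp add: g_model ddot_def T_def fst_comb)
  ultimately obtain w where w: "\<And>a. T a = w \<times> a"
    by (rule skew_linear_eq_cross) blast
  have "P \<subseteq> Epoint w"
  proof
    fix x
    assume "x \<in> P"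
    then have "comb (fst (model x)) = x"
      using bij comb_P fst_comb unfolding bij_betw_def inj_on_def by blast
    then show "x \<in> Epoint w"
      using w[of "fst (model x)"] by (simp add: mem_Epoint T_def)
  qed
  then have "P = Epoint w"
    using P inE_Epoint[of w] by (intro subspace_dim_equal) (auto simp: inE_def)
  then show thesis
    by (rule that)
qed

lemma inE_iff_Epoint: "inE g P \<longleftrightarrow> (\<exists>w. P = Epoint w)"
  using inE_imp_Epoint inE_Epoint by blast

lemma Epoint_inj: "Epoint w = Epoint w' \<longleftrightarrow> w = w'"
proof
  assume eq: "Epoint w = Epoint w'"
  have "(w - w') \<times> a = 0" for a
  proof -
    have "Epoint_vec w a \<in> Epoint w'" using eq Epoint_eq_range by auto
    then show ?thesis by (simp add: mem_Epoint Cross3.left_diff_distrib)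
  qed
  then show "w = w'"
    using cross_basis_nonzero[of "w - w'"] by auto
qed simp

lemma lift_Epoint: "lift (Epoint w) v = Epoint_vec w (coord v)"
  unfolding lift_def
proof (rule the_equality)
  show "Epoint_vec w (coord v) \<in> Epoint w \<and> fst (Epoint_vec w (coord v)) = v"
    by (simp add: mem_Epoint) (simp add: Epoint_vec_def model_inv_def)
  fix x
  assume "x \<in> Epoint w \<and> fst x = v"
  then have "model x = model (Epoint_vec w (coord v))"
    by (simp add: mem_Epoint prod_eq_iff fst_model)
  then show "x = Epoint_vec w (coord v)" by (simp only: model_inj)
qed

lemma coord_expand: "coord v $ k = (\<Sum>l\<in>UNIV. v $ l * vin g (axis l 1) (e0 k))"
proof -
  have "coord v $ k = vin g (\<Sum>l\<in>UNIV. v $ l *\<^sub>R axis l 1) (e0 k)"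
    using basis_expansion[of v] by (simp add: coord_def scalar_mult_eq_scaleR)
  then show ?thesis by (simp add: vin_sum_left vin_scale_left)
qed

lemma pos_onb_coord_rotation:
  assumes "pos_onb g OR e"
  shows "rotation_matrix (\<chi> i. coord (e i))"
proof -
  have "vin_orthonormal e" and eOR: "(\<lambda>i. (e i, 0)) \<in> OR"
    using assms pos_onb_iff by blast+
  then have orth: "orthogonal_matrix (\<chi> i. coord (e i))"
    by (intro orthogonal_matrix_of_rows) (simp add: vin_orthonormal_def flip: vin_coord)
  obtain b where "dbasis b"
    and OR: "\<And>b'. b' \<in> OR \<longleftrightarrow> dbasis b' \<and> det (re_matrix b') * det (re_matrix b) > 0"
    using orientation_iff_det[OF orientation] by blast
  have "det (\<chi> i. e i) * det (re_matrix b) > 0" "det (\<chi> i. e0 i) * det (re_matrix b) > 0"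
    using OR eOR e0 pos_onb_iff by auto
  then have same_sign: "det (\<chi> i. e i) * det (\<chi> i. e0 i) > 0"
    by (auto simp: zero_less_mult_iff)
  define C :: "real^3^3" where "C = (\<chi> l k. vin g (axis l 1) (e0 k))"
  have rows: "(\<chi> i. coord (f i)) = (\<chi> i. f i) ** C" for f
    by (simp add: C_def vec_eq_iff matrix_matrix_mult_def coord_expand)
  have "(\<chi> i. coord (e0 i)) = (mat 1 :: real^3^3)"
    by (simp add: coord_e0 vec_eq_iff mat_def axis_def)
  then have "det ((\<chi> i. e0 i) ** C) = 1"
    by (simp flip: rows)
  then have "det (\<chi> i. e0 i) * det C > 0"
    by (simp add: det_mul)
  then have "det (\<chi> i. coord (e i)) > 0"
    using same_sign by (auto simp: rows det_mul zero_less_mult_iff)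
  moreover have "det (\<chi> i. coord (e i)) = 1 \<or> det (\<chi> i. coord (e i)) = - 1"
    using det_orthogonal_matrix[OF orth] .
  ultimately have "det (\<chi> i. coord (e i)) = 1"
    by linarith
  with orth show ?thesis
    unfolding rotation_matrix_def by blast
qed

lemma model_eps_smul: "model (smul (0, 1) x) = (0, coord (fst x))"
  by (simp add: model_def)

lemma fst_lift_Epoint: "fst (lift (Epoint w) v) = v"
  by (simp add: lift_Epoint Epoint_vec_def model_inv_def)

lemma lift_translate_iff:
  assumes e: "pos_onb g OR e"
  shows "lift (Epoint w') (e i) = lift (Epoint w) (e i) +
      smul (0, 1) (\<Sum>j\<in>UNIV. \<Sum>k\<in>UNIV. (levi i j k * vin g v (e k)) *\<^sub>R lift (Epoint w) (e j))
    \<longleftrightarrow> w' \<times> coord (e i) = (w + coord v) \<times> coord (e i)"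
proof -
  let ?S = "\<Sum>j\<in>UNIV. \<Sum>k\<in>UNIV. (levi i j k * vin g v (e k)) *\<^sub>R lift (Epoint w) (e j)"
  have "coord (fst ?S) = (\<Sum>j\<in>UNIV. \<Sum>k\<in>UNIV. (levi i j k * (coord v \<bullet> coord (e k))) *\<^sub>R coord (e j))"
    by (simp add: fst_sum fst_lift_Epoint coord_sum coord_scale vin_coord)
  also have "\<dots> = coord v \<times> coord (e i)"
    by (rule cross_frame_levi[OF pos_onb_coord_rotation[OF e], symmetric])
  finally have lhs: "model (lift (Epoint w) (e i) + smul (0, 1) ?S) =
      (coord (e i), (w + coord v) \<times> coord (e i))"
    by (simp add: model_add model_eps_smul lift_Epoint cross_add_left)
  have rhs: "model (lift (Epoint w') (e i)) = (coord (e i), w' \<times> coord (e i))"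
    by (simp add: lift_Epoint)
  show ?thesis
    by (subst model_inj[symmetric]) (simp only: lhs rhs prod.inject simp_thms)
qed

lemma translates_Epoint_iff:
  "translates g OR A v B \<longleftrightarrow> (\<exists>w. A = Epoint w \<and> B = Epoint (w + coord v))"
proof
  assume tr: "translates g OR A v B"
  then obtain w w' where A: "A = Epoint w" and B: "B = Epoint w'"
    unfolding translates_def inE_iff_Epoint by blast
  have "w' \<times> coord (e0 i) = (w + coord v) \<times> coord (e0 i)" for i
    using tr e0 lift_translate_iff[OF e0] unfolding translates_def A B by blast
  then have "(w' - (w + coord v)) \<times> axis i 1 = 0" for i
    by (simp add: coord_e0 Cross3.left_diff_distrib)
  then have "w' = w + coord v"
    using cross_basis_nonzero[of "w' - (w + coord v)"] by auto
  then show "\<exists>w. A = Epoint w \<and> B = Epoint (w + coord v)"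
    using A B by blast
qed (auto simp: translates_def inE_Epoint lift_translate_iff)

section \<open>Lines and axes\<close>

definition Eline :: "real^3 \<Rightarrow> real^3 \<Rightarrow> dmod set set" where
  "Eline w c = range (\<lambda>t. Epoint (w + t *\<^sub>R c))"

lemma line_dir_iff: "line_dir g OR L d \<longleftrightarrow> d \<noteq> 0 \<and> (\<exists>w. L = Eline w (coord d))"
proof -
  have "{B. \<exists>t. translates g OR (Epoint w) (t *\<^sub>R d) B} = Eline w (coord d)" for w
    by (auto simp: translates_Epoint_iff Epoint_inj Eline_def coord_scale)
  then show ?thesis
    unfolding line_dir_def inE_iff_Epoint by auto
qed

lemma is_line_iff: "is_line g OR L \<longleftrightarrow> (\<exists>w c. c \<noteq> 0 \<and> L = Eline w c)"
proof
  assume "is_line g OR L"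
  then obtain d w where "d \<noteq> 0" "L = Eline w (coord d)"
    unfolding is_line_def line_dir_iff by blast
  then show "\<exists>w c. c \<noteq> 0 \<and> L = Eline w c"
    by (intro exI[of _ w] exI[of _ "coord d"]) (simp add: coord_eq_0_iff)
next
  assume "\<exists>w c. c \<noteq> 0 \<and> L = Eline w c"
  then obtain w c where "c \<noteq> 0" "L = Eline w c"
    by blast
  moreover have "coord_inv c \<noteq> 0"
    using calculation coord_inv_eq_0_iff by blast
  ultimately have "line_dir g OR L (coord_inv c)"
    unfolding line_dir_iff coord_coord_inv by blast
  then show "is_line g OR L"
    unfolding is_line_def by (rule exI)
qed

lemma Eline_eq_imp_parallel:
  assumes "Eline w1 c1 = Eline w2 c2"
  obtains s where "c2 = s *\<^sub>R c1"
proof -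
  have "Epoint (w2 + 0 *\<^sub>R c2) \<in> Eline w2 c2" "Epoint (w2 + 1 *\<^sub>R c2) \<in> Eline w2 c2"
    unfolding Eline_def by (rule rangeI)+
  then have "Epoint w2 \<in> Eline w1 c1" "Epoint (w2 + c2) \<in> Eline w1 c1"
    using assms by simp_all
  then have "\<exists>t. w2 = w1 + t *\<^sub>R c1" "\<exists>t. w2 + c2 = w1 + t *\<^sub>R c1"
    unfolding Eline_def by (auto simp: Epoint_inj)
  then obtain t0 t1 where "w2 = w1 + t0 *\<^sub>R c1" "w2 + c2 = w1 + t1 *\<^sub>R c1"
    by blast
  then have "c2 = (t1 - t0) *\<^sub>R c1"
    by (simp add: algebra_simps)
  then show thesis by (rule that)
qed

lemma Eline_rescale:
  assumes "s \<noteq> 0"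
  shows "Eline w (s *\<^sub>R c) = Eline w c"
  unfolding Eline_def
proof (intro equalityI subsetI)
  fix P
  assume "P \<in> range (\<lambda>t. Epoint (w + t *\<^sub>R s *\<^sub>R c))"
  then obtain t where "P = Epoint (w + (t * s) *\<^sub>R c)"
    by auto
  then show "P \<in> range (\<lambda>t. Epoint (w + t *\<^sub>R c))"
    using rangeI[of "\<lambda>t. Epoint (w + t *\<^sub>R c)" "t * s"] by simp
next
  fix P
  assume "P \<in> range (\<lambda>t. Epoint (w + t *\<^sub>R c))"
  then obtain t where "P = Epoint (w + (t / s) *\<^sub>R s *\<^sub>R c)"
    using assms by auto
  then show "P \<in> range (\<lambda>t. Epoint (w + t *\<^sub>R s *\<^sub>R c))"
    using rangeI[of "\<lambda>t. Epoint (w + t *\<^sub>R s *\<^sub>R c)" "t / s"] by simp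
qed

lemma line_dir_Eline_iff:
  assumes "c \<noteq> 0"
  shows "line_dir g OR (Eline w c) d \<longleftrightarrow> (\<exists>s. s \<noteq> 0 \<and> coord d = s *\<^sub>R c)"
proof
  assume "line_dir g OR (Eline w c) d"
  then obtain w' where "d \<noteq> 0" "Eline w c = Eline w' (coord d)"
    by (auto simp: line_dir_iff)
  moreover obtain s where "coord d = s *\<^sub>R c"
    using Eline_eq_imp_parallel[OF calculation(2)] .
  moreover have "s \<noteq> 0"
    using calculation coord_eq_0_iff by auto
  ultimately show "\<exists>s. s \<noteq> 0 \<and> coord d = s *\<^sub>R c"
    by blast
next
  assume "\<exists>s. s \<noteq> 0 \<and> coord d = s *\<^sub>R c"
  then obtain s where s: "s \<noteq> 0" and d: "coord d = s *\<^sub>R c"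
    by blast
  have "d \<noteq> 0"
  proof
    assume "d = 0"
    then have "s *\<^sub>R c = 0"
      using d by simp
    then show False
      using s assms by simp
  qed
  moreover have "Eline w c = Eline w (coord d)"
    using d Eline_rescale[OF s] by simp
  ultimately show "line_dir g OR (Eline w c) d"
    unfolding line_dir_iff by blast
qed

lemma meet_orth_Eline_iff:
  assumes c1: "c1 \<noteq> 0" and c2: "c2 \<noteq> 0"
  shows "meet_orth g OR (Eline w1 c1) (Eline w2 c2) \<longleftrightarrow>
    (\<exists>s t. w1 + s *\<^sub>R c1 = w2 + t *\<^sub>R c2) \<and> c1 \<bullet> c2 = 0"
proof -
  have "is_line g OR (Eline w1 c1)" "is_line g OR (Eline w2 c2)"
    using assms by (auto simp: is_line_iff)
  moreover have "Eline w1 c1 \<inter> Eline w2 c2 \<noteq> {} \<longleftrightarrow> (\<exists>s t. w1 + s *\<^sub>R c1 = w2 + t *\<^sub>R c2)"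
  proof
    assume "Eline w1 c1 \<inter> Eline w2 c2 \<noteq> {}"
    then obtain s t where "Epoint (w1 + s *\<^sub>R c1) = Epoint (w2 + t *\<^sub>R c2)"
      unfolding Eline_def by auto
    then show "\<exists>s t. w1 + s *\<^sub>R c1 = w2 + t *\<^sub>R c2"
      by (auto simp: Epoint_inj)
  next
    assume "\<exists>s t. w1 + s *\<^sub>R c1 = w2 + t *\<^sub>R c2"
    then obtain s t where st: "w1 + s *\<^sub>R c1 = w2 + t *\<^sub>R c2"
      by blast
    have "Epoint (w1 + s *\<^sub>R c1) \<in> Eline w1 c1" "Epoint (w2 + t *\<^sub>R c2) \<in> Eline w2 c2"
      unfolding Eline_def by (rule rangeI)+
    then show "Eline w1 c1 \<inter> Eline w2 c2 \<noteq> {}"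
      unfolding st by blast
  qed
  moreover have "(\<forall>d1 d2. line_dir g OR (Eline w1 c1) d1 \<and> line_dir g OR (Eline w2 c2) d2 \<longrightarrow>
      vin g d1 d2 = 0) \<longleftrightarrow> c1 \<bullet> c2 = 0"
  proof
    assume orth: "\<forall>d1 d2. line_dir g OR (Eline w1 c1) d1 \<and> line_dir g OR (Eline w2 c2) d2 \<longrightarrow>
      vin g d1 d2 = 0"
    have "line_dir g OR (Eline w1 c1) (coord_inv c1)" "line_dir g OR (Eline w2 c2) (coord_inv c2)"
      unfolding line_dir_Eline_iff[OF c1] line_dir_Eline_iff[OF c2] by (intro exI[of _ 1], simp)+
    then have "vin g (coord_inv c1) (coord_inv c2) = 0"
      using orth by blast
    then show "c1 \<bullet> c2 = 0"
      by (simp add: vin_coord)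
  qed (auto simp: line_dir_Eline_iff[OF c1] line_dir_Eline_iff[OF c2] vin_coord)
  ultimately show ?thesis
    unfolding meet_orth_def by blast
qed

lemma unitpart_model:
  assumes "z \<notin> epsM"
  shows "model (unitpart g z) = dsgn (model z)"
proof -
  define X where "X = model z"
  have X: "fst X \<noteq> 0"
    using assms by (simp add: X_def epsM_model)
  have "unitpart g z = model_inv (dsgn X)"
    unfolding unitpart_def
  proof (rule the_equality)
    have "model z = smul (norm (fst X), fst X \<bullet> snd X / norm (fst X)) (model (model_inv (dsgn X)))"
      using smul_dsgn[OF X] by (simp add: X_def)
    then have "z = smul (norm (fst X), fst X \<bullet> snd X / norm (fst X)) (model_inv (dsgn X))"
      by (simp only: model_smul[symmetric] model_inj)
    moreover have "g (model_inv (dsgn X)) (model_inv (dsgn X)) = (1, 0)"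
      using ddot_dsgn[OF X] by (simp add: g_model)
    moreover have "0 < norm (fst X)"
      using X by simp
    ultimately show "g (model_inv (dsgn X)) (model_inv (dsgn X)) = (1, 0) \<and>
        (\<exists>a b. 0 < a \<and> z = smul (a, b) (model_inv (dsgn X)))"
      by blast
  next
    fix u
    assume "g u u = (1, 0) \<and> (\<exists>a b. 0 < a \<and> z = smul (a, b) u)"
    then obtain a b where unit: "g u u = (1, 0)" and a: "a > 0" and zu: "z = smul (a, b) u"
      by blast
    have "dsgn X = model u"
      using dsgn_smul_unit[of "model u" a b] unit a by (simp add: X_def zu model_smul g_model)
    then show "u = model_inv (dsgn X)"
      by simp
  qed
  then show ?thesis
    by (simp add: X_def)
qed

lemma unitpart_mem_Epoint:
  assumes "z \<notin> epsM" and xy: "model z = (x, y)"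
  shows "unitpart g z \<in> Epoint w \<longleftrightarrow> w \<times> x = y - (x \<bullet> y / (x \<bullet> x)) *\<^sub>R x"
proof -
  have "unitpart g z \<in> Epoint w \<longleftrightarrow>
      (1 / norm x) *\<^sub>R (y - (x \<bullet> y / (x \<bullet> x)) *\<^sub>R x) = (1 / norm x) *\<^sub>R (w \<times> x)"
    by (simp add: mem_Epoint unitpart_model[OF assms(1)] xy dsgn_def cross_mult_right)
  also have "\<dots> \<longleftrightarrow> y - (x \<bullet> y / (x \<bullet> x)) *\<^sub>R x = w \<times> x"
    using assms by (simp add: epsM_model)
  finally show ?thesis
    by auto
qed

lemma axis_of_eq:
  assumes z: "z \<notin> epsM" and xy: "model z = (x, y)"
  shows "axis_of g z = Eline ((1 / (x \<bullet> x)) *\<^sub>R (x \<times> y)) x"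
proof -
  define w1 where "w1 = (1 / (x \<bullet> x)) *\<^sub>R (x \<times> y)"
  have x: "x \<noteq> 0"
    using z xy by (simp add: epsM_model)
  have "(x \<times> y) \<times> x = (x \<bullet> x) *\<^sub>R y - (y \<bullet> x) *\<^sub>R x"
    by (simp add: cross3_simps forall_3)
  then have "w1 \<times> x = y - (x \<bullet> y / (x \<bullet> x)) *\<^sub>R x"
    using x by (simp add: w1_def cross_mult_left scaleR_diff_right inner_commute)
  then have "unitpart g z \<in> Epoint w \<longleftrightarrow> (\<exists>s. w = w1 + s *\<^sub>R x)" for w
    using unitpart_mem_Epoint[OF assms, of w] cross_eq_cross_iff[OF x, of w w1] by simp
  then show ?thesis
    unfolding axis_of_def Eline_def inE_iff_Epoint w1_def[symmetric] by auto
qed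

lemma meet_orth_axis_iff:
  assumes z: "z \<notin> epsM" and c: "c \<noteq> 0"
  shows "meet_orth g OR (axis_of g z) (Eline w c) \<longleftrightarrow> ddot (model z) (c, w \<times> c) = 0"
proof -
  obtain x y where xy: "model z = (x, y)"
    by fastforce
  have x: "x \<noteq> 0"
    using z xy by (simp add: epsM_model)
  define w1 where "w1 = (1 / (x \<bullet> x)) *\<^sub>R (x \<times> y)"
  have "meet_orth g OR (axis_of g z) (Eline w c) \<longleftrightarrow>
      (\<exists>s t. w1 + s *\<^sub>R x = w + t *\<^sub>R c) \<and> x \<bullet> c = 0"
    using axis_of_eq[OF z xy] meet_orth_Eline_iff[OF x c] by (simp add: w1_def)
  also have "\<dots> \<longleftrightarrow> (w1 - w) \<bullet> (x \<times> c) = 0 \<and> x \<bullet> c = 0"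
    using lines_meet_iff[of x c w1 w] norm_and_cross_eq_0[of x c] x c by blast
  also have "\<dots> \<longleftrightarrow> x \<bullet> (w \<times> c) + y \<bullet> c = 0 \<and> x \<bullet> c = 0"
  proof -
    have "w1 \<bullet> (x \<times> c) = y \<bullet> c" if "x \<bullet> c = 0"
      using x that by (simp add: w1_def dot_cross inner_commute)
    moreover have "w \<bullet> (x \<times> c) = - (x \<bullet> (w \<times> c))"
      by (simp add: cross3_simps)
    ultimately show ?thesis
      by (auto simp: inner_diff_left)
  qed
  also have "\<dots> \<longleftrightarrow> ddot (model z) (c, w \<times> c) = 0"
    by (auto simp: xy ddot_def zero_prod_def)
  finally show ?thesis .
qed

end

theorem proposition10:
  fixes g :: "dmod \<Rightarrow> dmod \<Rightarrow> dual" and OR :: "(3 \<Rightarrow> dmod) set"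
    and z1 z2 z3 :: dmod
  assumes "scalar_product g" and "orientation OR"
    and "z1 \<notin> epsM" and "z2 \<notin> epsM" and "z3 \<notin> epsM"
    and "\<forall>a b. smul a z1 + smul b z2 = 0 \<longrightarrow> a = 0 \<and> b = 0"
  shows "(\<exists>a b. z3 = smul a z1 + smul b z2) \<longleftrightarrow>
         (\<exists>L. is_line g OR L \<and>
              meet_orth g OR (axis_of g z1) L \<and>
              meet_orth g OR (axis_of g z2) L \<and>
              meet_orth g OR (axis_of g z3) L)"
proof -
  interpret oriented_dual_scalar_product g OR
    by unfold_locales (use assms in auto)
  obtain e0 where "pos_onb g OR e0"
    using pos_onb_exists by blast
  then interpret dual_frame g OR e0
    by unfold_locales
  have cross: "fst (model z1) \<times> fst (model z2) \<noteq> 0"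
    using dindep_imp_cross_nonzero model_dindep assms(6) by blast
  have "(\<exists>a b. z3 = smul a z1 + smul b z2) \<longleftrightarrow>
      (\<exists>a b. model z3 = smul a (model z1) + smul b (model z2))"
    by (rule model_dspan_iff)
  also have "\<dots> \<longleftrightarrow> (\<exists>w d. d \<noteq> 0 \<and> ddot (model z1) (d, w \<times> d) = 0 \<and>
      ddot (model z2) (d, w \<times> d) = 0 \<and> ddot (model z3) (d, w \<times> d) = 0)"
    by (rule dspan_iff_common_line[OF cross])
  also have "\<dots> \<longleftrightarrow> (\<exists>w d. d \<noteq> 0 \<and> meet_orth g OR (axis_of g z1) (Eline w d) \<and>
      meet_orth g OR (axis_of g z2) (Eline w d) \<and> meet_orth g OR (axis_of g z3) (Eline w d))"
    by (simp add: meet_orth_axis_iff[OF assms(3)] meet_orth_axis_iff[OF assms(4)]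
        meet_orth_axis_iff[OF assms(5)] cong: conj_cong)
  also have "\<dots> \<longleftrightarrow> (\<exists>L. is_line g OR L \<and> meet_orth g OR (axis_of g z1) L \<and>
      meet_orth g OR (axis_of g z2) L \<and> meet_orth g OR (axis_of g z3) L)"
    by (auto simp: is_line_iff)
  finally show ?thesis .
qed

end
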